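(* Let $(\mathscr{E},\mathscr{M})$ be an ordinary prefactorization system on (the underlying ordinary category of) a $\mathscr{V}$-category $\mathscr{B}$ such that each $e\in\mathscr{E}$ is $\mathscr{V}$-orthogonal to each $m\in\mathscr{M}$. Then $(\mathscr{E},\mathscr{M})$ is a $\mathscr{V}$-prefactorization-system on $\mathscr{B}$.
   Context: $\mathscr{V}$ is a closed symmetric monoidal category; ordinary categories are not assumed locally small. For $e:A_1\to A_2$, $m:B_1\to B_2$ in $\mathscr{B}$, $e\downarrow_\mathscr{V} m$ ($\mathscr{V}$-orthogonal) means the square formed by $\mathscr{B}(A_2,m)$, $\mathscr{B}(A_1,m)$, $\mathscr{B}(e,B_1)$, $\mathscr{B}(e,B_2)$ is a pullback in $\mathscr{V}$; ordinary orthogonality $e\downarrow m$ means each commutative square $m\cdot u=v\cdot e$ has a unique diagonal $w$ with $w\cdot e=u$, $m\cdot w=v$. An ordinary prefactorization system is a pair $(\mathscr{E},\mathscr{M})$ where $\mathscr{M}$ is exactly the class of $m$ with $e\downarrow m$ for all $e\in\mathscr{E}$ and $\mathscr{E}$ exactly the class of $e$ with $e\downarrow m$ for all $m\in\mathscr{M}$; a $\mathscr{V}$-prefactorization-system is defined likewise with $\downarrow_\mathscr{V}$. *)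

theory Defs
  imports Main
begin

text \<open>A category with object type 'o and arrow type 'a (not assumed locally small:
arrows form an arbitrary set of a HOL type). cCmp g f is the composite g . f.\<close>

record ('o, 'a) cat =
  cObj :: "'o set"
  cArr :: "'a set"
  cDom :: "'a \<Rightarrow> 'o"
  cCod :: "'a \<Rightarrow> 'o"
  cCmp :: "'a \<Rightarrow> 'a \<Rightarrow> 'a"
  cId  :: "'o \<Rightarrow> 'a"

definition hom :: "('o, 'a, 'z) cat_scheme \<Rightarrow> 'o \<Rightarrow> 'o \<Rightarrow> 'a set" where
  "hom C A B = {f \<in> cArr C. cDom C f = A \<and> cCod C f = B}"

definition category :: "('o, 'a, 'z) cat_scheme \<Rightarrow> bool" where
  "category C \<longleftrightarrow>
     (\<forall>f\<in>cArr C. cDom C f \<in> cObj C \<and> cCod C f \<in> cObj C) \<and>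
     (\<forall>A\<in>cObj C. cId C A \<in> hom C A A) \<and>
     (\<forall>f g. f \<in> cArr C \<and> g \<in> cArr C \<and> cCod C f = cDom C g
            \<longrightarrow> cCmp C g f \<in> hom C (cDom C f) (cCod C g)) \<and>
     (\<forall>f\<in>cArr C. cCmp C (cId C (cCod C f)) f = f \<and> cCmp C f (cId C (cDom C f)) = f) \<and>
     (\<forall>f g h. f \<in> cArr C \<and> g \<in> cArr C \<and> h \<in> cArr C \<and> cCod C f = cDom C g \<and> cCod C g = cDom C h
            \<longrightarrow> cCmp C h (cCmp C g f) = cCmp C (cCmp C h g) f)"

definition iso_arr :: "('o, 'a, 'z) cat_scheme \<Rightarrow> 'a \<Rightarrow> bool" where
  "iso_arr C f \<longleftrightarrow> f \<in> cArr C \<and>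
     (\<exists>g\<in>hom C (cCod C f) (cDom C f).
        cCmp C g f = cId C (cDom C f) \<and> cCmp C f g = cId C (cCod C f))"

definition inv_arr :: "('o, 'a, 'z) cat_scheme \<Rightarrow> 'a \<Rightarrow> 'a" where
  "inv_arr C f = (THE g. g \<in> hom C (cCod C f) (cDom C f) \<and>
        cCmp C g f = cId C (cDom C f) \<and> cCmp C f g = cId C (cCod C f))"

definition is_pullback :: "('o, 'a, 'z) cat_scheme \<Rightarrow> 'a \<Rightarrow> 'a \<Rightarrow> 'a \<Rightarrow> 'a \<Rightarrow> bool" where
  "is_pullback C p1 p2 f g \<longleftrightarrow>
     p1 \<in> cArr C \<and> p2 \<in> cArr C \<and> f \<in> cArr C \<and> g \<in> cArr C \<and>
     cDom C p1 = cDom C p2 \<and> cDom C f = cCod C p1 \<and> cDom C g = cCod C p2 \<and>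
     cCod C f = cCod C g \<and> cCmp C f p1 = cCmp C g p2 \<and>
     (\<forall>q1 q2. q1 \<in> cArr C \<and> q2 \<in> cArr C \<and> cDom C q1 = cDom C q2 \<and>
              cCod C q1 = cCod C p1 \<and> cCod C q2 = cCod C p2 \<and> cCmp C f q1 = cCmp C g q2
        \<longrightarrow> (\<exists>!h. h \<in> hom C (cDom C q1) (cDom C p1) \<and> cCmp C p1 h = q1 \<and> cCmp C p2 h = q2))"

definition orth :: "('o, 'a, 'z) cat_scheme \<Rightarrow> 'a \<Rightarrow> 'a \<Rightarrow> bool" where
  "orth C e m \<longleftrightarrow> e \<in> cArr C \<and> m \<in> cArr C \<and>
     (\<forall>u v. u \<in> hom C (cDom C e) (cDom C m) \<and> v \<in> hom C (cCod C e) (cCod C m) \<and>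
            cCmp C m u = cCmp C v e
        \<longrightarrow> (\<exists>!w. w \<in> hom C (cCod C e) (cDom C m) \<and> cCmp C w e = u \<and> cCmp C m w = v))"

definition prefactorization_system :: "('o, 'a, 'z) cat_scheme \<Rightarrow> 'a set \<Rightarrow> 'a set \<Rightarrow> bool" where
  "prefactorization_system C E M \<longleftrightarrow>
     M = {m \<in> cArr C. \<forall>e\<in>E. orth C e m} \<and> E = {e \<in> cArr C. \<forall>m\<in>M. orth C e m}"

record ('o, 'a) smcat = "('o, 'a) cat" +
  tens  :: "'o \<Rightarrow> 'o \<Rightarrow> 'o"
  tensa :: "'a \<Rightarrow> 'a \<Rightarrow> 'a"
  unit  :: "'o"
  assoc :: "'o \<Rightarrow> 'o \<Rightarrow> 'o \<Rightarrow> 'a"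
  lunit :: "'o \<Rightarrow> 'a"
  runit :: "'o \<Rightarrow> 'a"
  symm  :: "'o \<Rightarrow> 'o \<Rightarrow> 'a"
  ihom  :: "'o \<Rightarrow> 'o \<Rightarrow> 'o"
  ev    :: "'o \<Rightarrow> 'o \<Rightarrow> 'a"

definition monoidal_category :: "('o, 'a) smcat \<Rightarrow> bool" where
  "monoidal_category V \<longleftrightarrow> category V \<and>
     unit V \<in> cObj V \<and>
     (\<forall>A\<in>cObj V. \<forall>B\<in>cObj V. tens V A B \<in> cObj V) \<and>
     \<comment> \<open>tensor is a bifunctor\<close>
     (\<forall>f\<in>cArr V. \<forall>g\<in>cArr V. tensa V f g \<in>
         hom V (tens V (cDom V f) (cDom V g)) (tens V (cCod V f) (cCod V g))) \<and>
     (\<forall>A\<in>cObj V. \<forall>B\<in>cObj V. tensa V (cId V A) (cId V B) = cId V (tens V A B)) \<and>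
     (\<forall>f g h k. f \<in> cArr V \<and> g \<in> cArr V \<and> h \<in> cArr V \<and> k \<in> cArr V \<and>
          cCod V f = cDom V g \<and> cCod V h = cDom V k \<longrightarrow>
          tensa V (cCmp V g f) (cCmp V k h) = cCmp V (tensa V g k) (tensa V f h)) \<and>
     \<comment> \<open>associator: natural isomorphism\<close>
     (\<forall>A\<in>cObj V. \<forall>B\<in>cObj V. \<forall>C\<in>cObj V.
         assoc V A B C \<in> hom V (tens V (tens V A B) C) (tens V A (tens V B C)) \<and>
         iso_arr V (assoc V A B C)) \<and>
     (\<forall>f\<in>cArr V. \<forall>g\<in>cArr V. \<forall>h\<in>cArr V.
         cCmp V (assoc V (cCod V f) (cCod V g) (cCod V h)) (tensa V (tensa V f g) h) =
         cCmp V (tensa V f (tensa V g h)) (assoc V (cDom V f) (cDom V g) (cDom V h))) \<and>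
     \<comment> \<open>unitors: natural isomorphisms\<close>
     (\<forall>A\<in>cObj V. lunit V A \<in> hom V (tens V (unit V) A) A \<and> iso_arr V (lunit V A)) \<and>
     (\<forall>A\<in>cObj V. runit V A \<in> hom V (tens V A (unit V)) A \<and> iso_arr V (runit V A)) \<and>
     (\<forall>f\<in>cArr V. cCmp V f (lunit V (cDom V f)) =
         cCmp V (lunit V (cCod V f)) (tensa V (cId V (unit V)) f)) \<and>
     (\<forall>f\<in>cArr V. cCmp V f (runit V (cDom V f)) =
         cCmp V (runit V (cCod V f)) (tensa V f (cId V (unit V)))) \<and>
     \<comment> \<open>pentagon\<close>
     (\<forall>A\<in>cObj V. \<forall>B\<in>cObj V. \<forall>C\<in>cObj V. \<forall>D\<in>cObj V.
         cCmp V (tensa V (cId V A) (assoc V B C D))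
           (cCmp V (assoc V A (tens V B C) D) (tensa V (assoc V A B C) (cId V D))) =
         cCmp V (assoc V A B (tens V C D)) (assoc V (tens V A B) C D)) \<and>
     \<comment> \<open>triangle\<close>
     (\<forall>A\<in>cObj V. \<forall>B\<in>cObj V.
         cCmp V (tensa V (cId V A) (lunit V B)) (assoc V A (unit V) B) =
         tensa V (runit V A) (cId V B)) \<and>
     \<comment> \<open>(redundant by Kelly's coherence lemma, included as in Mac Lane's original axioms)\<close>
     lunit V (unit V) = runit V (unit V)"

definition symmetric_monoidal_category :: "('o, 'a) smcat \<Rightarrow> bool" where
  "symmetric_monoidal_category V \<longleftrightarrow> monoidal_category V \<and>
     (\<forall>A\<in>cObj V. \<forall>B\<in>cObj V. symm V A B \<in> hom V (tens V A B) (tens V B A)) \<and>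
     (\<forall>f\<in>cArr V. \<forall>g\<in>cArr V.
         cCmp V (symm V (cCod V f) (cCod V g)) (tensa V f g) =
         cCmp V (tensa V g f) (symm V (cDom V f) (cDom V g))) \<and>
     (\<forall>A\<in>cObj V. \<forall>B\<in>cObj V. cCmp V (symm V B A) (symm V A B) = cId V (tens V A B)) \<and>
     \<comment> \<open>hexagon\<close>
     (\<forall>A\<in>cObj V. \<forall>B\<in>cObj V. \<forall>C\<in>cObj V.
         cCmp V (assoc V B C A) (cCmp V (symm V A (tens V B C)) (assoc V A B C)) =
         cCmp V (tensa V (cId V B) (symm V A C))
           (cCmp V (assoc V B A C) (tensa V (symm V A B) (cId V C))))"

text \<open>Closed: each functor (-) \<otimes> B has a right adjoint [B,-], given by internal homs
with evaluation maps having the universal property.\<close>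

definition closed_symmetric_monoidal_category :: "('o, 'a) smcat \<Rightarrow> bool" where
  "closed_symmetric_monoidal_category V \<longleftrightarrow> symmetric_monoidal_category V \<and>
     (\<forall>B\<in>cObj V. \<forall>C\<in>cObj V.
        ihom V B C \<in> cObj V \<and> ev V B C \<in> hom V (tens V (ihom V B C) B) C \<and>
        (\<forall>A\<in>cObj V. \<forall>f\<in>hom V (tens V A B) C.
            \<exists>!g. g \<in> hom V A (ihom V B C) \<and> cCmp V (ev V B C) (tensa V g (cId V B)) = f))"

text \<open>vComp A B C : B(B,C) \<otimes> B(A,B) \<rightarrow> B(A,C);  vId A : I \<rightarrow> B(A,A).\<close>

record ('b, 'o, 'a) vcat =
  vObj  :: "'b set"
  vHom  :: "'b \<Rightarrow> 'b \<Rightarrow> 'o"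
  vComp :: "'b \<Rightarrow> 'b \<Rightarrow> 'b \<Rightarrow> 'a"
  vId   :: "'b \<Rightarrow> 'a"

definition enriched_category :: "('o, 'a) smcat \<Rightarrow> ('b, 'o, 'a) vcat \<Rightarrow> bool" where
  "enriched_category V \<B> \<longleftrightarrow>
     (\<forall>A\<in>vObj \<B>. \<forall>B\<in>vObj \<B>. vHom \<B> A B \<in> cObj V) \<and>
     (\<forall>A\<in>vObj \<B>. \<forall>B\<in>vObj \<B>. \<forall>C\<in>vObj \<B>.
        vComp \<B> A B C \<in> hom V (tens V (vHom \<B> B C) (vHom \<B> A B)) (vHom \<B> A C)) \<and>
     (\<forall>A\<in>vObj \<B>. vId \<B> A \<in> hom V (unit V) (vHom \<B> A A)) \<and>
     (\<forall>A\<in>vObj \<B>. \<forall>B\<in>vObj \<B>. \<forall>C\<in>vObj \<B>. \<forall>D\<in>vObj \<B>.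
        cCmp V (vComp \<B> A C D)
          (cCmp V (tensa V (cId V (vHom \<B> C D)) (vComp \<B> A B C))
             (assoc V (vHom \<B> C D) (vHom \<B> B C) (vHom \<B> A B))) =
        cCmp V (vComp \<B> A B D) (tensa V (vComp \<B> B C D) (cId V (vHom \<B> A B)))) \<and>
     (\<forall>A\<in>vObj \<B>. \<forall>B\<in>vObj \<B>.
        cCmp V (vComp \<B> A B B) (tensa V (vId \<B> B) (cId V (vHom \<B> A B))) = lunit V (vHom \<B> A B)) \<and>
     (\<forall>A\<in>vObj \<B>. \<forall>B\<in>vObj \<B>.
        cCmp V (vComp \<B> A A B) (tensa V (cId V (vHom \<B> A B)) (vId \<B> A)) = runit V (vHom \<B> A B))"

text \<open>The underlying ordinary category B_0: an arrow A \<rightarrow> B is a triple (A, B, f) with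
f : I \<rightarrow> \<B>(A,B) in V; composition g . f = M \<circ> (g \<otimes> f) \<circ> inverse of the left unitor at I.\<close>

definition underlying :: "('o, 'a) smcat \<Rightarrow> ('b, 'o, 'a) vcat \<Rightarrow> ('b, 'b \<times> 'b \<times> 'a) cat" where
  "underlying V \<B> =
    \<lparr> cObj = vObj \<B>,
      cArr = {(A, B, f). A \<in> vObj \<B> \<and> B \<in> vObj \<B> \<and> f \<in> hom V (unit V) (vHom \<B> A B)},
      cDom = (\<lambda>(A, B, f). A),
      cCod = (\<lambda>(A, B, f). B),
      cCmp = (\<lambda>(B', C, g) (A, B, f).
                (A, C, cCmp V (vComp \<B> A B C)
                         (cCmp V (tensa V g f) (inv_arr V (lunit V (unit V)))))),
      cId = (\<lambda>A. (A, A, vId \<B> A)) \<rparr>"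

text \<open>\<B>(A,m) : \<B>(A,B1) \<rightarrow> \<B>(A,B2) for m : B1 \<rightarrow> B2, and \<B>(e,B) : \<B>(A2,B) \<rightarrow> \<B>(A1,B)
for e : A1 \<rightarrow> A2.\<close>

definition homL :: "('o, 'a) smcat \<Rightarrow> ('b, 'o, 'a) vcat \<Rightarrow> 'b \<Rightarrow> 'b \<times> 'b \<times> 'a \<Rightarrow> 'a" where
  "homL V \<B> A m = (case m of (B1, B2, m') \<Rightarrow>
      cCmp V (vComp \<B> A B1 B2)
        (cCmp V (tensa V m' (cId V (vHom \<B> A B1))) (inv_arr V (lunit V (vHom \<B> A B1)))))"

definition homR :: "('o, 'a) smcat \<Rightarrow> ('b, 'o, 'a) vcat \<Rightarrow> 'b \<times> 'b \<times> 'a \<Rightarrow> 'b \<Rightarrow> 'a" where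
  "homR V \<B> e B = (case e of (A1, A2, e') \<Rightarrow>
      cCmp V (vComp \<B> A1 A2 B)
        (cCmp V (tensa V (cId V (vHom \<B> A2 B)) e') (inv_arr V (runit V (vHom \<B> A2 B)))))"

text \<open>V-orthogonality: the square with sides \<B>(A2,m), \<B>(A1,m), \<B>(e,B1), \<B>(e,B2) is a
pullback in V.\<close>

definition vorth :: "('o, 'a) smcat \<Rightarrow> ('b, 'o, 'a) vcat \<Rightarrow> 'b \<times> 'b \<times> 'a \<Rightarrow> 'b \<times> 'b \<times> 'a \<Rightarrow> bool" where
  "vorth V \<B> e m \<longleftrightarrow> e \<in> cArr (underlying V \<B>) \<and> m \<in> cArr (underlying V \<B>) \<and>
     (case e of (A1, A2, _) \<Rightarrow> case m of (B1, B2, _) \<Rightarrow>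
        is_pullback V (homL V \<B> A2 m) (homR V \<B> e B1) (homR V \<B> e B2) (homL V \<B> A1 m))"

definition vprefactorization_system ::
  "('o, 'a) smcat \<Rightarrow> ('b, 'o, 'a) vcat \<Rightarrow> ('b \<times> 'b \<times> 'a) set \<Rightarrow> ('b \<times> 'b \<times> 'a) set \<Rightarrow> bool" where
  "vprefactorization_system V \<B> E M \<longleftrightarrow>
     M = {m \<in> cArr (underlying V \<B>). \<forall>e\<in>E. vorth V \<B> e m} \<and>
     E = {e \<in> cArr (underlying V \<B>). \<forall>m\<in>M. vorth V \<B> e m}"

end

theory Submission
  imports Defs
begin

text \<open>The representable functor \<open>V(I,-)\<close> preserves pullbacks. A global element
  \<open>I \<rightarrow> \<B>(A,B)\<close> is an arrow of the underlying category \<open>\<B>\<^sub>0\<close>, and on global elements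
  \<open>\<B>(A,m)\<close> and \<open>\<B>(e,B)\<close> act as composition with \<open>m\<close> and \<open>e\<close> in \<open>\<B>\<^sub>0\<close>. So \<open>V(I,-)\<close> turns
  the pullback square expressing \<open>e \<down>\<^sub>V m\<close> into the square of hom-sets whose pullback property
  is \<open>e \<down> m\<close>: \<open>V\<close>-orthogonality implies ordinary orthogonality. Together with the hypothesis
  this shows that the orthogonality classes of \<open>\<E>\<close> and \<open>\<M>\<close> are the same for both notions.\<close>

lemma category_comp_in_hom:
  assumes "category C" "f \<in> hom C X Y" "g \<in> hom C Y Z"
  shows "cCmp C g f \<in> hom C X Z"
  using assms unfolding category_def hom_def by force

lemma category_comp_assoc:
  assumes "category C" "f \<in> hom C X Y" "g \<in> hom C Y Z" "h \<in> hom C Z W"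
  shows "cCmp C h (cCmp C g f) = cCmp C (cCmp C h g) f"
  using assms unfolding category_def hom_def by force

lemma category_id_left:
  assumes "category C" "f \<in> hom C X Y"
  shows "cCmp C (cId C Y) f = f"
  using assms unfolding category_def hom_def by force

lemma category_id_right:
  assumes "category C" "f \<in> hom C X Y"
  shows "cCmp C f (cId C X) = f"
  using assms unfolding category_def hom_def by force

lemma category_id_in_hom:
  assumes "category C" "X \<in> cObj C"
  shows "cId C X \<in> hom C X X"
  using assms unfolding category_def by blast

lemma inv_arr_inverse:
  assumes C: "category C" and iso: "iso_arr C f" and f: "f \<in> hom C X Y"
  shows "inv_arr C f \<in> hom C Y X" "cCmp C (inv_arr C f) f = cId C X"
    "cCmp C f (inv_arr C f) = cId C Y"
proof -
  have dom_cod: "cDom C f = X" "cCod C f = Y" using f unfolding hom_def by auto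
  obtain g where g: "g \<in> hom C Y X" "cCmp C g f = cId C X" "cCmp C f g = cId C Y"
    using iso dom_cod unfolding iso_arr_def by auto
  have "g' = g" if g': "g' \<in> hom C Y X" "cCmp C g' f = cId C X" for g'
  proof -
    have "g' = cCmp C g' (cCmp C f g)" using category_id_right[OF C g'(1)] g(3) by simp
    also have "\<dots> = cCmp C (cCmp C g' f) g" using category_comp_assoc[OF C g(1) f g'(1)] .
    also have "\<dots> = g" using g'(2) category_id_left[OF C g(1)] by simp
    finally show ?thesis .
  qed
  then have "inv_arr C f = g"
    unfolding inv_arr_def dom_cod using g by (intro the_equality) blast+
  then show "inv_arr C f \<in> hom C Y X" "cCmp C (inv_arr C f) f = cId C X"
    "cCmp C f (inv_arr C f) = cId C Y"
    using g by simp_all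
qed

lemma inv_arr_commuting_square:
  assumes C: "category C" and isos: "iso_arr C a" "iso_arr C b"
    and a: "a \<in> hom C P X" and b: "b \<in> hom C Q Y" and f: "f \<in> hom C X Y" and g: "g \<in> hom C P Q"
    and square: "cCmp C f a = cCmp C b g"
  shows "cCmp C (inv_arr C b) f = cCmp C g (inv_arr C a)"
proof -
  note a' = inv_arr_inverse[OF C isos(1) a] and b' = inv_arr_inverse[OF C isos(2) b]
  have ga': "cCmp C g (inv_arr C a) \<in> hom C X Q" using category_comp_in_hom[OF C a'(1) g] .
  have "cCmp C (inv_arr C b) f = cCmp C (inv_arr C b) (cCmp C (cCmp C f a) (inv_arr C a))"
    using category_comp_assoc[OF C a'(1) a f] a'(3) category_id_right[OF C f] by simp
  also have "\<dots> = cCmp C (cCmp C (inv_arr C b) b) (cCmp C g (inv_arr C a))"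
    using square category_comp_assoc[OF C a'(1) g b] category_comp_assoc[OF C ga' b b'(1)] by simp
  also have "\<dots> = cCmp C g (inv_arr C a)" using b'(2) category_id_left[OF C ga'] by simp
  finally show ?thesis .
qed

lemma is_pullback_factorization:
  assumes pb: "is_pullback C p1 p2 f g"
    and hom: "p1 \<in> hom C P X" "p2 \<in> hom C P Y"
    and q: "q1 \<in> hom C T X" "q2 \<in> hom C T Y" "cCmp C f q1 = cCmp C g q2"
  shows "\<exists>!h. h \<in> hom C T P \<and> cCmp C p1 h = q1 \<and> cCmp C p2 h = q2"
proof -
  have "q1 \<in> cArr C" "q2 \<in> cArr C" "cDom C q1 = T" "cDom C q2 = T"
    "cCod C q1 = cCod C p1" "cCod C q2 = cCod C p2" "cDom C p1 = P"
    using hom q unfolding hom_def by auto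
  with pb q(3) show ?thesis unfolding is_pullback_def by metis
qed

locale enriched_over_monoidal =
  fixes V :: "('o, 'a) smcat" and \<B> :: "('b, 'o, 'a) vcat"
  assumes monoidal: "monoidal_category V" and enriched: "enriched_category V \<B>"
begin

abbreviation "I \<equiv> unit V"
abbreviation "\<B>\<^sub>0 \<equiv> underlying V \<B>"

lemma category: "category V"
  using monoidal unfolding monoidal_category_def by blast

lemma unit_obj: "I \<in> cObj V"
  using monoidal unfolding monoidal_category_def by blast

lemma tensa_in_hom:
  assumes "f \<in> hom V X Y" "g \<in> hom V Z W"
  shows "tensa V f g \<in> hom V (tens V X Z) (tens V Y W)"
  using monoidal assms unfolding monoidal_category_def hom_def by force

lemma tensa_interchange:
  assumes "f \<in> hom V X Y" "g \<in> hom V Y Z" "h \<in> hom V P Q" "k \<in> hom V Q R"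
  shows "cCmp V (tensa V g k) (tensa V f h) = tensa V (cCmp V g f) (cCmp V k h)"
proof -
  have "\<forall>f g h k. f \<in> cArr V \<and> g \<in> cArr V \<and> h \<in> cArr V \<and> k \<in> cArr V \<and>
          cCod V f = cDom V g \<and> cCod V h = cDom V k \<longrightarrow>
          tensa V (cCmp V g f) (cCmp V k h) = cCmp V (tensa V g k) (tensa V f h)"
    using monoidal unfolding monoidal_category_def by blast
  with assms show ?thesis unfolding hom_def by force
qed

lemma lunit_iso:
  assumes "X \<in> cObj V"
  shows "lunit V X \<in> hom V (tens V I X) X" "iso_arr V (lunit V X)"
  using monoidal assms unfolding monoidal_category_def by blast+

lemma runit_iso:
  assumes "X \<in> cObj V"
  shows "runit V X \<in> hom V (tens V X I) X" "iso_arr V (runit V X)"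
  using monoidal assms unfolding monoidal_category_def by blast+

lemma lunit_natural:
  assumes "f \<in> hom V X Y"
  shows "cCmp V f (lunit V X) = cCmp V (lunit V Y) (tensa V (cId V I) f)"
  using monoidal assms unfolding monoidal_category_def hom_def by force

lemma runit_natural:
  assumes "f \<in> hom V X Y"
  shows "cCmp V f (runit V X) = cCmp V (runit V Y) (tensa V f (cId V I))"
  using monoidal assms unfolding monoidal_category_def hom_def by force

lemma lunit_unit_eq_runit_unit: "lunit V I = runit V I"
  using monoidal unfolding monoidal_category_def by blast

lemma inv_lunit_natural:
  assumes f: "f \<in> hom V X Y"
  shows "cCmp V (inv_arr V (lunit V Y)) f = cCmp V (tensa V (cId V I) f) (inv_arr V (lunit V X))"
proof -
  have objs: "X \<in> cObj V" "Y \<in> cObj V" using category f unfolding category_def hom_def by auto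
  show ?thesis
    using inv_arr_commuting_square[OF category lunit_iso(2)[OF objs(1)] lunit_iso(2)[OF objs(2)]
        lunit_iso(1)[OF objs(1)] lunit_iso(1)[OF objs(2)] f
        tensa_in_hom[OF category_id_in_hom[OF category unit_obj] f] lunit_natural[OF f]] .
qed

lemma inv_runit_natural:
  assumes f: "f \<in> hom V X Y"
  shows "cCmp V (inv_arr V (runit V Y)) f = cCmp V (tensa V f (cId V I)) (inv_arr V (runit V X))"
proof -
  have objs: "X \<in> cObj V" "Y \<in> cObj V" using category f unfolding category_def hom_def by auto
  show ?thesis
    using inv_arr_commuting_square[OF category runit_iso(2)[OF objs(1)] runit_iso(2)[OF objs(2)]
        runit_iso(1)[OF objs(1)] runit_iso(1)[OF objs(2)] f
        tensa_in_hom[OF f category_id_in_hom[OF category unit_obj]] runit_natural[OF f]] .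
qed

lemma whisker_left_global_element:
  assumes x: "x \<in> hom V I X" and y: "y \<in> hom V I Y"
  shows "cCmp V (cCmp V (tensa V y (cId V X)) (inv_arr V (lunit V X))) x
         = cCmp V (tensa V y x) (inv_arr V (lunit V I))"
proof -
  have X: "X \<in> cObj V" using category x unfolding category_def hom_def by auto
  note idI = category_id_in_hom[OF category unit_obj] and idX = category_id_in_hom[OF category X]
  note inv_X = inv_arr_inverse(1)[OF category lunit_iso(2,1)[OF X]]
  note inv_I = inv_arr_inverse(1)[OF category lunit_iso(2,1)[OF unit_obj]]
  have "cCmp V (cCmp V (tensa V y (cId V X)) (inv_arr V (lunit V X))) x
        = cCmp V (tensa V y (cId V X)) (cCmp V (tensa V (cId V I) x) (inv_arr V (lunit V I)))"
    using category_comp_assoc[OF category x inv_X tensa_in_hom[OF y idX]] inv_lunit_natural[OF x]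
    by simp
  also have "\<dots> = cCmp V (tensa V (cCmp V y (cId V I)) (cCmp V (cId V X) x)) (inv_arr V (lunit V I))"
    using category_comp_assoc[OF category inv_I tensa_in_hom[OF idI x] tensa_in_hom[OF y idX]]
      tensa_interchange[OF idI y x idX] by simp
  finally show ?thesis
    using category_id_right[OF category y] category_id_left[OF category x] by simp
qed

lemma whisker_right_global_element:
  assumes x: "x \<in> hom V I X" and y: "y \<in> hom V I Y"
  shows "cCmp V (cCmp V (tensa V (cId V Y) x) (inv_arr V (runit V Y))) y
         = cCmp V (tensa V y x) (inv_arr V (lunit V I))"
proof -
  have Y: "Y \<in> cObj V" using category y unfolding category_def hom_def by auto
  note idI = category_id_in_hom[OF category unit_obj] and idY = category_id_in_hom[OF category Y]
  note inv_Y = inv_arr_inverse(1)[OF category runit_iso(2,1)[OF Y]]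
  note inv_I = inv_arr_inverse(1)[OF category runit_iso(2,1)[OF unit_obj]]
  have "cCmp V (cCmp V (tensa V (cId V Y) x) (inv_arr V (runit V Y))) y
        = cCmp V (tensa V (cId V Y) x) (cCmp V (tensa V y (cId V I)) (inv_arr V (runit V I)))"
    using category_comp_assoc[OF category y inv_Y tensa_in_hom[OF idY x]] inv_runit_natural[OF y]
    by simp
  also have "\<dots> = cCmp V (tensa V (cCmp V (cId V Y) y) (cCmp V x (cId V I))) (inv_arr V (runit V I))"
    using category_comp_assoc[OF category inv_I tensa_in_hom[OF y idI] tensa_in_hom[OF idY x]]
      tensa_interchange[OF y idY idI x] by simp
  finally show ?thesis
    using category_id_right[OF category x] category_id_left[OF category y]
      lunit_unit_eq_runit_unit by simp
qed

lemma vHom_obj: "A \<in> vObj \<B> \<Longrightarrow> C \<in> vObj \<B> \<Longrightarrow> vHom \<B> A C \<in> cObj V"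
  using enriched unfolding enriched_category_def by blast

lemma vComp_in_hom:
  "A \<in> vObj \<B> \<Longrightarrow> B \<in> vObj \<B> \<Longrightarrow> C \<in> vObj \<B> \<Longrightarrow>
   vComp \<B> A B C \<in> hom V (tens V (vHom \<B> B C) (vHom \<B> A B)) (vHom \<B> A C)"
  using enriched unfolding enriched_category_def by blast

lemma underlying_hom_iff:
  "x \<in> hom \<B>\<^sub>0 A C \<longleftrightarrow>
     (\<exists>f. x = (A, C, f) \<and> A \<in> vObj \<B> \<and> C \<in> vObj \<B> \<and> f \<in> hom V I (vHom \<B> A C))"
  unfolding hom_def[of "\<B>\<^sub>0"] by (auto simp: underlying_def)

lemma underlying_arr_iff:
  "(A, C, f) \<in> cArr \<B>\<^sub>0 \<longleftrightarrow> A \<in> vObj \<B> \<and> C \<in> vObj \<B> \<and> f \<in> hom V I (vHom \<B> A C)"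
  by (simp add: underlying_def)

lemma homL_in_hom:
  assumes "A \<in> vObj \<B>" "(B1, B2, m) \<in> cArr \<B>\<^sub>0"
  shows "homL V \<B> A (B1, B2, m) \<in> hom V (vHom \<B> A B1) (vHom \<B> A B2)"
proof -
  have objs: "B1 \<in> vObj \<B>" "B2 \<in> vObj \<B>" and m: "m \<in> hom V I (vHom \<B> B1 B2)"
    using assms(2) by (simp_all add: underlying_arr_iff)
  have X: "vHom \<B> A B1 \<in> cObj V" using vHom_obj assms(1) objs(1) .
  show ?thesis unfolding homL_def
    using category_comp_in_hom[OF category category_comp_in_hom[OF category
        inv_arr_inverse(1)[OF category lunit_iso(2,1)[OF X]]
        tensa_in_hom[OF m category_id_in_hom[OF category X]]] vComp_in_hom[OF assms(1) objs]]
    by simp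
qed

lemma homR_in_hom:
  assumes "(A1, A2, e) \<in> cArr \<B>\<^sub>0" "B \<in> vObj \<B>"
  shows "homR V \<B> (A1, A2, e) B \<in> hom V (vHom \<B> A2 B) (vHom \<B> A1 B)"
proof -
  have objs: "A1 \<in> vObj \<B>" "A2 \<in> vObj \<B>" and e: "e \<in> hom V I (vHom \<B> A1 A2)"
    using assms(1) by (simp_all add: underlying_arr_iff)
  have Y: "vHom \<B> A2 B \<in> cObj V" using vHom_obj objs(2) assms(2) .
  show ?thesis unfolding homR_def
    using category_comp_in_hom[OF category category_comp_in_hom[OF category
        inv_arr_inverse(1)[OF category runit_iso(2,1)[OF Y]]
        tensa_in_hom[OF category_id_in_hom[OF category Y] e]] vComp_in_hom[OF objs assms(2)]]
    by simp
qed

lemma underlying_comp_eq_homL: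
  assumes "A \<in> vObj \<B>" "(B1, B2, m) \<in> cArr \<B>\<^sub>0" and f: "f \<in> hom V I (vHom \<B> A B1)"
  shows "cCmp \<B>\<^sub>0 (B1, B2, m) (A, B1, f) = (A, B2, cCmp V (homL V \<B> A (B1, B2, m)) f)"
proof -
  have objs: "B1 \<in> vObj \<B>" "B2 \<in> vObj \<B>" and m: "m \<in> hom V I (vHom \<B> B1 B2)"
    using assms(2) by (simp_all add: underlying_arr_iff)
  have X: "vHom \<B> A B1 \<in> cObj V" using vHom_obj assms(1) objs(1) .
  have whisker: "cCmp V (tensa V m (cId V (vHom \<B> A B1))) (inv_arr V (lunit V (vHom \<B> A B1)))
                 \<in> hom V (vHom \<B> A B1) (tens V (vHom \<B> B1 B2) (vHom \<B> A B1))"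
    using category_comp_in_hom[OF category inv_arr_inverse(1)[OF category lunit_iso(2,1)[OF X]]
        tensa_in_hom[OF m category_id_in_hom[OF category X]]] .
  show ?thesis
    unfolding homL_def
    using category_comp_assoc[OF category f whisker vComp_in_hom[OF assms(1) objs]]
      whisker_left_global_element[OF f m]
    by (simp add: underlying_def)
qed

lemma underlying_comp_eq_homR:
  assumes "(A1, A2, e) \<in> cArr \<B>\<^sub>0" "B \<in> vObj \<B>" and g: "g \<in> hom V I (vHom \<B> A2 B)"
  shows "cCmp \<B>\<^sub>0 (A2, B, g) (A1, A2, e) = (A1, B, cCmp V (homR V \<B> (A1, A2, e) B) g)"
proof -
  have objs: "A1 \<in> vObj \<B>" "A2 \<in> vObj \<B>" and e: "e \<in> hom V I (vHom \<B> A1 A2)"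
    using assms(1) by (simp_all add: underlying_arr_iff)
  have Y: "vHom \<B> A2 B \<in> cObj V" using vHom_obj objs(2) assms(2) .
  have whisker: "cCmp V (tensa V (cId V (vHom \<B> A2 B)) e) (inv_arr V (runit V (vHom \<B> A2 B)))
                 \<in> hom V (vHom \<B> A2 B) (tens V (vHom \<B> A2 B) (vHom \<B> A1 A2))"
    using category_comp_in_hom[OF category inv_arr_inverse(1)[OF category runit_iso(2,1)[OF Y]]
        tensa_in_hom[OF category_id_in_hom[OF category Y] e]] .
  show ?thesis
    unfolding homR_def
    using category_comp_assoc[OF category g whisker vComp_in_hom[OF objs assms(2)]]
      whisker_right_global_element[OF e g]
    by (simp add: underlying_def)
qed

lemma ex1_underlying_hom_iff:
  assumes "A \<in> vObj \<B>" "C \<in> vObj \<B>"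
  shows "(\<exists>!w. w \<in> hom \<B>\<^sub>0 A C \<and> P w) \<longleftrightarrow> (\<exists>!f. f \<in> hom V I (vHom \<B> A C) \<and> P (A, C, f))"
  using assms unfolding underlying_hom_iff by (intro iffI; elim ex1E; blast)

lemma vorth_imp_orth:
  assumes vorth: "vorth V \<B> e m"
  shows "orth \<B>\<^sub>0 e m"
proof -
  obtain A1 A2 e' where e: "e = (A1, A2, e')" by (cases e)
  obtain B1 B2 m' where m: "m = (B1, B2, m')" by (cases m)
  have arrs: "e \<in> cArr \<B>\<^sub>0" "m \<in> cArr \<B>\<^sub>0" using vorth unfolding vorth_def by auto
  then have objs: "A1 \<in> vObj \<B>" "A2 \<in> vObj \<B>" "B1 \<in> vObj \<B>" "B2 \<in> vObj \<B>"
    unfolding e m by (simp_all add: underlying_arr_iff)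
  have pullback: "is_pullback V (homL V \<B> A2 m) (homR V \<B> e B1) (homR V \<B> e B2) (homL V \<B> A1 m)"
    using vorth unfolding vorth_def e m by simp
  show ?thesis unfolding orth_def
  proof (intro conjI arrs allI impI)
    fix u v
    assume "u \<in> hom \<B>\<^sub>0 (cDom \<B>\<^sub>0 e) (cDom \<B>\<^sub>0 m) \<and> v \<in> hom \<B>\<^sub>0 (cCod \<B>\<^sub>0 e) (cCod \<B>\<^sub>0 m) \<and>
      cCmp \<B>\<^sub>0 m u = cCmp \<B>\<^sub>0 v e"
    then obtain u' v' where u: "u = (A1, B1, u')" "u' \<in> hom V I (vHom \<B> A1 B1)"
      and v: "v = (A2, B2, v')" "v' \<in> hom V I (vHom \<B> A2 B2)"
      and square: "cCmp \<B>\<^sub>0 m u = cCmp \<B>\<^sub>0 v e"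
      unfolding e m underlying_hom_iff by (auto simp: underlying_def)
    have "cCmp V (homR V \<B> e B2) v' = cCmp V (homL V \<B> A1 m) u'"
      using square underlying_comp_eq_homL[OF objs(1) arrs(2)[unfolded m] u(2)]
        underlying_comp_eq_homR[OF arrs(1)[unfolded e] objs(4) v(2)]
      unfolding e m u(1) v(1) by simp
    then have "\<exists>!h. h \<in> hom V I (vHom \<B> A2 B1) \<and>
        cCmp V (homL V \<B> A2 m) h = v' \<and> cCmp V (homR V \<B> e B1) h = u'"
      by (intro is_pullback_factorization[OF pullback _ _ v(2) u(2)])
        (simp_all only: e m homL_in_hom[OF objs(2) arrs(2)[unfolded m]]
          homR_in_hom[OF arrs(1)[unfolded e] objs(3)])
    moreover have "cCmp \<B>\<^sub>0 (A2, B1, h) e = u \<longleftrightarrow> cCmp V (homR V \<B> e B1) h = u'"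
      and "cCmp \<B>\<^sub>0 m (A2, B1, h) = v \<longleftrightarrow> cCmp V (homL V \<B> A2 m) h = v'"
      if "h \<in> hom V I (vHom \<B> A2 B1)" for h
      using underlying_comp_eq_homR[OF arrs(1)[unfolded e] objs(3) that]
        underlying_comp_eq_homL[OF objs(2) arrs(2)[unfolded m] that]
      unfolding e m u(1) v(1) by simp_all
    ultimately have "\<exists>!w. w \<in> hom \<B>\<^sub>0 A2 B1 \<and> cCmp \<B>\<^sub>0 w e = u \<and> cCmp \<B>\<^sub>0 m w = v"
      unfolding ex1_underlying_hom_iff[OF objs(2,3)] by blast
    then show "\<exists>!w. w \<in> hom \<B>\<^sub>0 (cCod \<B>\<^sub>0 e) (cDom \<B>\<^sub>0 m) \<and> cCmp \<B>\<^sub>0 w e = u \<and> cCmp \<B>\<^sub>0 m w = v"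
      unfolding e m by (simp add: underlying_def)
  qed
qed

end

theorem proposition5p1:
  fixes V :: "('o, 'a) smcat" and \<B> :: "('b, 'o, 'a) vcat"
    and E M :: "('b \<times> 'b \<times> 'a) set"
  assumes "closed_symmetric_monoidal_category V"
    and "enriched_category V \<B>"
    and "prefactorization_system (underlying V \<B>) E M"
    and "\<forall>e\<in>E. \<forall>m\<in>M. vorth V \<B> e m"
  shows "vprefactorization_system V \<B> E M"
proof -
  have "monoidal_category V"
    using assms(1) unfolding closed_symmetric_monoidal_category_def
      symmetric_monoidal_category_def by blast
  then interpret enriched_over_monoidal V \<B> using assms(2) by unfold_locales
  have M: "m \<in> M \<longleftrightarrow> m \<in> cArr \<B>\<^sub>0 \<and> (\<forall>e\<in>E. orth \<B>\<^sub>0 e m)"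
    and E: "e \<in> E \<longleftrightarrow> e \<in> cArr \<B>\<^sub>0 \<and> (\<forall>m\<in>M. orth \<B>\<^sub>0 e m)" for e m
    using assms(3) unfolding prefactorization_system_def by blast+
  have "M = {m \<in> cArr \<B>\<^sub>0. \<forall>e\<in>E. vorth V \<B> e m}"
    using M assms(4) vorth_imp_orth by auto
  moreover have "E = {e \<in> cArr \<B>\<^sub>0. \<forall>m\<in>M. vorth V \<B> e m}"
    using E assms(4) vorth_imp_orth by auto
  ultimately show ?thesis unfolding vprefactorization_system_def ..
qed

end
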